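(* Fix integers $k\ge1$ and $j$. For integers $n\ge1$ and $m\ge0$ with $m+j\ge0$, let $z=\beta_n+iy$ and $$E=\frac{1}{2\pi}\int_{\beta_n< |y|\le \pi}\frac{1}{(e^{-z};e^{-z})_{\infty}}H_{k,m,j}(e^{-z})e^{nz}\,dy.$$ Then $E=O_{j,k}\!\left(\beta_n^{-1/2}\exp\!\left(\tfrac{3}{2}\Lambda_n\right)\right)$ as $n\to+\infty$, uniformly in such $m$.
   Context: $(q;q)_\infty=\prod_{j\ge1}(1-q^j)$. $\beta_n=\pi/\sqrt{6(n-1/24)}$ and $\Lambda_n=\pi\sqrt{(n-1/24)/6}$. For $|q|<1$, $H_{k,m,j}(q)=\sum_{n\ge 1}(-1)^{n-1}q^{(k-1/2)n^2+mn}(q^{-n/2}-q^{n/2})q^{jn}$. *)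

theory Defs
  imports "HOL-Analysis.Analysis"
begin

definition qpoch_inf :: "complex \<Rightarrow> complex" where
  "qpoch_inf q = (\<Prod>i. 1 - q ^ Suc i)"

definition beta_n :: "nat \<Rightarrow> real" where
  "beta_n n = pi / sqrt (6 * (real n - 1/24))"

definition Lambda_n :: "nat \<Rightarrow> real" where
  "Lambda_n n = pi * sqrt ((real n - 1/24) / 6)"

text \<open>H_{k,m,j}(q) evaluated at q = e^{-z}; a real power q^a is read as e^{-a z}.
  Summation index n >= 1 is written as Suc i, i >= 0.\<close>
definition H_at :: "int \<Rightarrow> int \<Rightarrow> int \<Rightarrow> complex \<Rightarrow> complex" where
  "H_at k m j z = (\<Sum>i. let n = real (Suc i) in
      (-1) ^ i
      * exp (- z * of_real ((real_of_int k - 1/2) * n^2 + real_of_int m * n))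
      * (exp (- z * of_real (- n / 2)) - exp (- z * of_real (n / 2)))
      * exp (- z * of_real (real_of_int j * n)))"

definition E_int :: "int \<Rightarrow> int \<Rightarrow> nat \<Rightarrow> int \<Rightarrow> complex" where
  "E_int k j n m = of_real (1 / (2 * pi)) *
     integral {y::real. beta_n n < \<bar>y\<bar> \<and> \<bar>y\<bar> \<le> pi}
       (\<lambda>y. let z = Complex (beta_n n) y in
              H_at k m j z * exp (of_nat n * z) / qpoch_inf (exp (- z)))"

end

(*
  On the arc beta < |y| <= pi the integrand is exponentially smaller than at y = 0, for three reasons.
  The theta-type series H is dominated termwise by a Gaussian, so |H(e^-z)| = O(beta^(-1/2)).
  Expanding ln |1 - q^i| and exchanging the absolutely convergent double series gives
  ln |1/(q;q)_inf| = sum_m Re (1/(e^(m z) - 1)) / m, which is about pi^2/(6 beta) at y = 0 but at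
  most pi^2/(12 beta) + O(1) on the arc: for |y| >= 12 beta the term m = 1 is already small, while
  for |y| < 12 beta the terms with m |z| <= 1/2 are bounded by Re (1/(m z)) / m + |z| via
  1/(e^u - 1) = 1/u - 1/2 + O(u), and Re (1/z) <= 1/(2 beta). Finally |e^(n z)| = e^(n beta), and
  n beta + pi^2/(12 beta) = 3/2 Lambda_n + beta/24 at beta = beta_n.
*)
theory Submission
  imports Defs "HOL-Complex_Analysis.Weierstrass_Factorization"
begin

section \<open>The modulus of the Euler product\<close>

lemma Re_power_div_sums_neg_ln_norm:
  fixes w :: complex
  assumes "norm w < 1"
  shows "(\<lambda>m. Re (w ^ m) / real m) sums (- ln (norm (1 - w)))"
proof -
  have "(\<lambda>m. - ((- (- w)) ^ m) / of_nat m) sums ln (1 + (- w))"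
    by (rule Ln_series') (use assms in simp)
  from sums_Re[OF this] have "(\<lambda>m. - (Re (w ^ m) / real m)) sums Re (ln (1 - w))"
    by (simp add: Re_divide_of_nat)
  moreover have "1 - w \<noteq> 0" using assms by auto
  ultimately show ?thesis
    using sums_minus by fastforce
qed

lemma suminf_rows_sums_suminf_cols:
  fixes a :: "nat \<Rightarrow> nat \<Rightarrow> real"
  assumes dom: "\<And>i m. \<bar>a i m\<bar> \<le> g i * h m"
    and g: "summable g" "\<And>i. 0 \<le> g i" and h: "summable h" "\<And>m. 0 \<le> h m"
  shows "(\<lambda>i. \<Sum>m. a i m) sums (\<Sum>m. \<Sum>i. a i m)"
proof -
  have h_has_sum: "(h has_sum suminf h) UNIV"
    using summable_sums[OF h(1)] h(2) by (rule sums_nonneg_imp_has_sum)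
  have g_has_sum: "(g has_sum suminf g) UNIV"
    using summable_sums[OF g(1)] g(2) by (rule sums_nonneg_imp_has_sum)
  have "(\<lambda>(i, m). g i * h m) summable_on UNIV \<times> UNIV"
  proof (rule summable_on_SigmaI[where g = "\<lambda>i. g i * suminf h"])
    show "((\<lambda>m. case (i, m) of (i, m) \<Rightarrow> g i * h m) has_sum g i * suminf h) UNIV" for i
      using has_sum_cmult_right[OF h_has_sum] by simp
    show "(\<lambda>i. g i * suminf h) summable_on UNIV"
      using has_sum_cmult_left[OF g_has_sum] by (rule has_sum_imp_summable)
  qed (use g(2) h(2) in \<open>auto intro: mult_nonneg_nonneg\<close>)
  then have "(\<lambda>(i, m). a i m) summable_on UNIV \<times> UNIV"
    unfolding summable_on_iff_abs_summable_on_real[of "\<lambda>(i, m). a i m"]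
    by (rule Infinite_Sum.abs_summable_on_comparison_test') (use dom in \<open>simp add: case_prod_beta\<close>)
  then obtain T where T: "((\<lambda>(i, m). a i m) has_sum T) (UNIV \<times> UNIV)"
    by (auto simp: summable_on_def)
  have row_norms: "summable (\<lambda>m. norm (a i m))" for i
    by (rule summable_comparison_test[of _ "\<lambda>m. g i * h m"])
       (use dom h(1) in \<open>auto intro: summable_mult\<close>)
  have col_norms: "summable (\<lambda>i. norm (a i m))" for m
    by (rule summable_comparison_test[of _ "\<lambda>i. g i * h m"])
       (use dom g(1) in \<open>auto intro: summable_mult2\<close>)
  have "((\<lambda>i. \<Sum>m. a i m) has_sum T) UNIV"
    by (rule has_sum_Sigma'[OF T])
       (use row_norms in \<open>auto intro!: norm_summable_imp_has_sum summable_sums[OF summable_norm_cancel]\<close>)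
  moreover have "((\<lambda>m. \<Sum>i. a i m) has_sum T) UNIV"
    by (rule has_sum_Sigma'[OF has_sum_swap[THEN iffD1, OF T]])
       (use col_norms in \<open>auto intro!: norm_summable_imp_has_sum summable_sums[OF summable_norm_cancel]\<close>)
  ultimately show ?thesis
    by (metis has_sum_imp_sums sums_unique)
qed

lemma norm_inverse_prodinf:
  fixes f :: "nat \<Rightarrow> 'a :: {real_normed_field, banach}"
  assumes f: "convergent_prod f" "\<And>i. f i \<noteq> 0"
    and s: "(\<lambda>i. - ln (norm (f i))) sums s"
  shows "norm (1 / prodinf f) = exp s"
proof (rule LIMSEQ_unique)
  have "prodinf f \<noteq> 0" using f by (rule prodinf_nonzero)
  then show "(\<lambda>n. norm (1 / (\<Prod>i\<le>n. f i))) \<longlonglongrightarrow> norm (1 / prodinf f)"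
    using convergent_prod_LIMSEQ[OF f(1)] by (intro tendsto_intros)
  have "norm (1 / (\<Prod>i\<le>n. f i)) = exp (\<Sum>i\<le>n. - ln (norm (f i)))" for n
  proof -
    have "norm (1 / (\<Prod>i\<le>n. f i)) = (\<Prod>i\<le>n. 1 / norm (f i))"
      by (simp add: norm_divide prod_norm prod_dividef)
    also have "\<dots> = (\<Prod>i\<le>n. exp (- ln (norm (f i))))"
      using f(2) by (intro prod.cong) (auto simp: exp_minus inverse_eq_divide)
    finally show ?thesis
      by (simp add: exp_sum)
  qed
  moreover have "(\<lambda>n. exp (\<Sum>i\<le>n. - ln (norm (f i)))) \<longlonglongrightarrow> exp s"
    using s by (intro tendsto_exp) (simp add: sums_def_le)
  ultimately show "(\<lambda>n. norm (1 / (\<Prod>i\<le>n. f i))) \<longlonglongrightarrow> exp s"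
    by simp
qed

lemma abs_Re_power_div_le:
  fixes w :: complex
  shows "\<bar>Re (w ^ m) / real m\<bar> \<le> norm w ^ m"
proof (cases "m = 0")
  case False
  have "\<bar>Re (w ^ m) / real m\<bar> \<le> norm (w ^ m) / real m"
    using abs_Re_le_cmod by (simp add: divide_right_mono)
  also have "\<dots> \<le> norm (w ^ m)"
    using False by (simp add: divide_le_eq mult_le_cancel_left1)
  finally show ?thesis
    by (simp add: norm_power)
qed simp

lemma Re_power_Suc_power_div_sums:
  fixes q :: complex
  assumes "norm q < 1"
  shows "(\<lambda>i. Re ((q ^ Suc i) ^ m) / real m) sums (Re (q ^ m / (1 - q ^ m)) / real m)"
proof (cases "m = 0")
  case False
  then have "norm (q ^ m) < 1"
    using assms by (simp add: norm_power power_less_one_iff)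
  then have "(\<lambda>i. q ^ m * (q ^ m) ^ i) sums (q ^ m * (1 / (1 - q ^ m)))"
    by (intro sums_mult geometric_sums)
  from sums_divide[OF sums_Re[OF this], of "real m"]
  have "(\<lambda>i. Re (q ^ m * (q ^ m) ^ i) / real m) sums (Re (q ^ m / (1 - q ^ m)) / real m)"
    by simp
  moreover have "(q ^ Suc i) ^ m = q ^ m * (q ^ m) ^ i" for i
    by (simp add: power_mult_distrib power_mult[symmetric] mult.commute)
  ultimately show ?thesis
    by simp
qed simp

lemma norm_inverse_qpoch_inf:
  fixes q :: complex
  assumes q: "norm q < 1"
  shows "norm (1 / qpoch_inf q) = exp (\<Sum>m. Re (q ^ m / (1 - q ^ m)) / real m)"
proof -
  define r where "r = norm q"
  have r: "0 \<le> r" "r < 1" using q by (auto simp: r_def)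
  have small: "norm (q ^ Suc i) < 1" for i
    using q by (simp add: norm_power power_less_one_iff del: power_Suc)
  then have nonzero: "1 - q ^ Suc i \<noteq> 0" for i
    by (metis norm_one order_less_irrefl right_minus_eq)
  have "summable (\<lambda>i. r * r ^ i)"
    using r by (intro summable_mult summable_geometric) simp
  then have converges: "convergent_prod (\<lambda>i. 1 - q ^ Suc i)"
    by (intro abs_convergent_prod_imp_convergent_prod summable_imp_abs_convergent_prod)
       (simp add: norm_mult norm_power r_def)
  have "\<bar>Re ((q ^ Suc i) ^ m) / real m\<bar> \<le> r ^ i * r ^ m" for i m
  proof (cases "m = 0")
    case False
    have "\<bar>Re ((q ^ Suc i) ^ m) / real m\<bar> \<le> norm (q ^ Suc i) ^ m"
      by (rule abs_Re_power_div_le)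
    also have "\<dots> = r ^ (Suc i * m)"
      by (simp only: norm_power r_def power_mult)
    also have "\<dots> \<le> r ^ (i + m)"
      using False r by (intro power_decreasing) auto
    finally show ?thesis
      by (simp add: power_add)
  qed (use r in simp)
  then have "(\<lambda>i. \<Sum>m. Re ((q ^ Suc i) ^ m) / real m)
      sums (\<Sum>m. \<Sum>i. Re ((q ^ Suc i) ^ m) / real m)"
    by (rule suminf_rows_sums_suminf_cols) (use r in \<open>auto intro: summable_geometric\<close>)
  moreover have "(\<Sum>m. Re ((q ^ Suc i) ^ m) / real m) = - ln (norm (1 - q ^ Suc i))" for i
    using Re_power_div_sums_neg_ln_norm[OF small] by (simp add: sums_iff)
  moreover have "(\<Sum>i. Re ((q ^ Suc i) ^ m) / real m) = Re (q ^ m / (1 - q ^ m)) / real m" for m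
    using Re_power_Suc_power_div_sums[OF q] by (simp add: sums_iff)
  ultimately have "(\<lambda>i. - ln (norm (1 - q ^ Suc i))) sums (\<Sum>m. Re (q ^ m / (1 - q ^ m)) / real m)"
    by simp
  then show ?thesis
    unfolding qpoch_inf_def by (rule norm_inverse_prodinf[OF converges nonzero])
qed

text \<open>Since \<open>x / 0 = 0\<close>, the term \<open>m = 0\<close> vanishes and sums over \<open>m\<close> may start at \<open>0\<close>.\<close>
definition qpoch_log_term :: "complex \<Rightarrow> nat \<Rightarrow> real" where
  "qpoch_log_term z m = Re (1 / (exp (of_nat m * z) - 1)) / real m"

lemma norm_inverse_qpoch_inf_exp:
  assumes "0 < Re z"
  shows "norm (1 / qpoch_inf (exp (- z))) = exp (\<Sum>m. qpoch_log_term z m)"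
proof -
  have "exp (- z) ^ m / (1 - exp (- z) ^ m) = 1 / (exp (of_nat m * z) - 1)" for m
  proof -
    have "exp (- z) ^ m = 1 / exp (of_nat m * z)"
      by (simp add: exp_of_nat_mult[symmetric] exp_minus field_simps)
    then show ?thesis
      by (cases "exp (of_nat m * z) = 1") (auto simp: field_simps)
  qed
  moreover have "norm (exp (- z)) < 1"
    using assms by simp
  ultimately show ?thesis
    by (simp add: norm_inverse_qpoch_inf qpoch_log_term_def)
qed

section \<open>Bounds for the exponent\<close>

lemma abs_qpoch_log_term_le:
  assumes "0 < Re z"
  shows "\<bar>qpoch_log_term z m\<bar> \<le> 1 / ((real m)^2 * Re z)"
proof (cases "m = 0")
  case False
  have m: "1 \<le> real m" using False by simp
  have "real m * Re z \<le> exp (real m * Re z) - 1"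
    using exp_ge_add_one_self[of "real m * Re z"] by linarith
  also have "\<dots> \<le> norm (exp (of_nat m * z) - 1)"
    using norm_triangle_ineq2[of "exp (of_nat m * z)" 1] by simp
  finally have lower: "real m * Re z \<le> norm (exp (of_nat m * z) - 1)" .
  have pos: "0 < real m * Re z" using m assms by simp
  have "\<bar>qpoch_log_term z m\<bar> \<le> norm (1 / (exp (of_nat m * z) - 1)) / real m"
    unfolding qpoch_log_term_def using abs_Re_le_cmod m by (simp add: divide_right_mono)
  also have "\<dots> = 1 / norm (exp (of_nat m * z) - 1) / real m"
    by (simp add: norm_divide)
  also have "\<dots> \<le> 1 / (real m * Re z) / real m"
    using lower pos m by (intro divide_right_mono divide_left_mono) (auto intro!: mult_pos_pos)
  also have "\<dots> = 1 / ((real m)^2 * Re z)"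
    by (simp add: power2_eq_square field_simps)
  finally show ?thesis .
qed (simp add: qpoch_log_term_def)

lemma inverse_squares_sums_from_0: "(\<lambda>m. 1 / (real m)^2) sums (pi^2 / 6)"
proof -
  have "(\<lambda>n. 1 / (real (Suc n))^2) sums (pi^2 / 6)"
    using inverse_squares_sums by (simp add: add.commute)
  then show ?thesis
    by (subst (asm) sums_Suc_iff) simp
qed

lemma summable_qpoch_log_term:
  assumes "0 < Re z"
  shows "summable (qpoch_log_term z)"
proof (rule summable_comparison_test')
  show "summable (\<lambda>m. 1 / ((real m)^2 * Re z))"
    using summable_divide[OF sums_summable[OF inverse_squares_sums_from_0], of "Re z"] by simp
  show "norm (qpoch_log_term z m) \<le> 1 / ((real m)^2 * Re z)" for m
    using abs_qpoch_log_term_le[OF assms] by simp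
qed

lemma inverse_squares_tail_le:
  assumes "1 \<le> M"
  shows "(\<Sum>i. 1 / (real (i + Suc M))^2) \<le> 1 / real M"
proof -
  define f where "f n = 1 / (real n + real M)" for n
  have "(\<lambda>n. inverse (real M + real n)) \<longlonglongrightarrow> 0"
    by (intro tendsto_inverse_0_at_top filterlim_tendsto_add_at_top[OF tendsto_const]
        filterlim_real_sequentially)
  then have "f \<longlonglongrightarrow> 0"
    by (simp add: f_def[abs_def] add.commute divide_inverse)
  from telescope_sums'[OF this] have telescope: "(\<lambda>n. f n - f (Suc n)) sums (1 / real M)"
    by (simp add: f_def)
  have le: "1 / (real (i + Suc M))^2 \<le> f i - f (Suc i)" for i
  proof -
    have p: "0 < real i + real M" using assms by simp
    have "1 / (real (i + Suc M))^2 \<le> 1 / ((real i + real M) * (real i + real M + 1))"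
    proof (rule divide_left_mono)
      show "(real i + real M) * (real i + real M + 1) \<le> (real (i + Suc M))^2"
        by (simp add: power2_eq_square algebra_simps)
    qed (use p in \<open>auto intro!: mult_pos_pos\<close>)
    also have "\<dots> = f i - f (Suc i)"
      using p by (simp add: f_def field_simps)
    finally show ?thesis .
  qed
  have "summable (\<lambda>i. 1 / (real (i + Suc M))^2)"
    by (rule summable_comparison_test'[OF sums_summable[OF telescope]]) (use le in auto)
  then show ?thesis
    using suminf_le[OF le _ sums_summable[OF telescope]] telescope by (simp add: sums_iff)
qed

lemma suminf_qpoch_log_term_tail_le:
  assumes z: "0 < Re z" and M: "1 \<le> M"
  shows "(\<Sum>n. qpoch_log_term z (n + Suc M)) \<le> 1 / (real M * Re z)"
proof -
  have squares: "summable (\<lambda>n. 1 / (real (n + Suc M))^2)"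
    using summable_ignore_initial_segment[OF sums_summable[OF inverse_squares_sums_from_0], of "Suc M"]
    by simp
  have "(\<Sum>n. qpoch_log_term z (n + Suc M)) \<le> (\<Sum>n. 1 / (real (n + Suc M))^2 / Re z)"
  proof (rule suminf_le)
    show "qpoch_log_term z (n + Suc M) \<le> 1 / (real (n + Suc M))^2 / Re z" for n
      using abs_qpoch_log_term_le[OF z, of "n + Suc M"] by simp
    show "summable (\<lambda>n. qpoch_log_term z (n + Suc M))"
      using summable_qpoch_log_term[OF z] by (rule summable_ignore_initial_segment)
    show "summable (\<lambda>n. 1 / (real (n + Suc M))^2 / Re z)"
      using squares by (rule summable_divide)
  qed
  also have "\<dots> = (\<Sum>n. 1 / (real (n + Suc M))^2) / Re z"
    using squares by (rule suminf_divide)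
  also have "\<dots> \<le> 1 / real M / Re z"
    using inverse_squares_tail_le[OF M] z by (intro divide_right_mono) auto
  finally show ?thesis
    by simp
qed

lemma norm_exp_minus_cubic_taylor_le:
  fixes u :: complex
  assumes "norm u \<le> 1/2"
  shows "norm (exp u - (1 + u + u^2/2 + u^3/6)) \<le> norm u ^ 4 / 3"
proof -
  have "norm (exp u - (1 + u + u^2/2 + u^3/6)) \<le> exp (norm u) * norm u ^ 4 / fact 3"
    using Taylor_exp_field[of u 3]
    by (simp add: eval_nat_numeral fact_numeral algebra_simps)
  also have "\<dots> \<le> 2 * norm u ^ 4 / fact 3"
    using real_exp_bound_lemma[of "norm u"] assms by (intro divide_right_mono mult_right_mono) auto
  finally show ?thesis
    by (simp add: fact_numeral)
qed

text \<open>Since \<open>1/(e\<^sup>u - 1) = 1/u - 1/2 + O(u)\<close>, dropping the \<open>-1/2\<close> leaves room for the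
  error term.\<close>
lemma Re_inverse_exp_minus_one_le:
  fixes u :: complex
  assumes u0: "u \<noteq> 0" and u1: "norm u \<le> 1/2"
  shows "Re (1 / (exp u - 1)) \<le> Re (1 / u) + norm u"
proof -
  define t where "t = norm u"
  have t0: "0 < t" and t1: "t \<le> 1/2" using u0 u1 by (simp_all add: t_def)
  define E where "E = exp u - 1"
  have E_ge: "t / 2 \<le> norm E" using norm_exp_bounds(1)[OF u1] by (simp add: E_def t_def)
  define \<rho> where "\<rho> = exp u - (1 + u + u^2/2 + u^3/6)"
  have \<rho>_le: "norm \<rho> \<le> t^4 / 3"
    unfolding \<rho>_def t_def using u1 by (rule norm_exp_minus_cubic_taylor_le)
  define N where "N = 2 * u - 2 * E + u * E"
  have "N = u^3/6 + u^4/6 + (u - 2) * \<rho>"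
    by (simp add: N_def E_def \<rho>_def algebra_simps power2_eq_square power3_eq_cube eval_nat_numeral)
       (simp add: field_simps)
  then have "norm N \<le> norm (u^3/6) + norm (u^4/6) + norm ((u - 2) * \<rho>)"
    by (metis norm_triangle_ineq order_trans add_right_mono)
  also have "\<dots> \<le> t^3/6 + t^4/6 + (t + 2) * (t^4/3)"
    unfolding norm_mult using \<rho>_le norm_triangle_ineq4[of u 2]
    by (intro add_mono mult_mono) (auto simp: norm_divide norm_power t_def)
  also have "\<dots> \<le> (2/3) * t^3"
  proof -
    have a: "t^4 \<le> t^3 / 2" using t0 t1 by (simp add: power_Suc[of t 3] eval_nat_numeral)
    have "(t + 2) * (t^4/3) \<le> (5/2) * ((t^3/2)/3)"
      by (intro mult_mono divide_right_mono a) (use t0 t1 in auto)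
    then show ?thesis using a by simp
  qed
  finally have N_le: "norm N \<le> (2/3) * t^3" .
  have "E \<noteq> 0" using E_ge t0 by auto
  then have "1 / E - 1 / u + 1/2 = N / (2 * u * E)"
    using u0 by (simp add: N_def field_simps)
  then have "norm (1 / E - 1 / u + 1/2) = norm N / (2 * t * norm E)"
    by (simp add: norm_divide norm_mult t_def)
  also have "\<dots> \<le> ((2/3) * t^3) / (2 * t * (t / 2))"
    by (intro frac_le mult_left_mono N_le E_ge) (use t0 in auto)
  also have "\<dots> = (2/3) * t"
    using t0 by (simp add: field_simps power3_eq_cube)
  finally have "norm (1 / E - 1 / u + 1/2) \<le> (2/3) * t" .
  then show ?thesis
    using abs_Re_le_cmod[of "1 / E - 1 / u + 1/2"] t0 by (simp add: E_def t_def)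
qed

lemma qpoch_log_term_le_small:
  assumes "z \<noteq> 0" and small: "real m * norm z \<le> 1/2"
  shows "qpoch_log_term z m \<le> Re (1 / z) / (real m)^2 + norm z"
proof (cases "m = 0")
  case False
  have m: "1 \<le> real m" using False by simp
  define u where "u = of_nat m * z"
  have "u \<noteq> 0" using False assms(1) by (simp add: u_def)
  moreover have norm_u: "norm u = real m * norm z" by (simp add: u_def norm_mult)
  ultimately have "Re (1 / (exp u - 1)) \<le> Re (1 / u) + norm u"
    using small by (intro Re_inverse_exp_minus_one_le) auto
  then have "qpoch_log_term z m \<le> (Re (1 / u) + norm u) / real m"
    using m by (simp add: qpoch_log_term_def u_def divide_right_mono)
  also have "Re (1 / u) = Re (1 / z) / real m"
  proof -
    have "1 / u = (1 / z) / of_nat m" by (simp add: u_def)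
    then show ?thesis by (simp only: Re_divide_of_nat)
  qed
  also have "(Re (1 / z) / real m + norm u) / real m = Re (1 / z) / (real m)^2 + norm z"
    using m by (simp add: norm_u field_simps power2_eq_square)
  finally show ?thesis .
qed (simp add: qpoch_log_term_def)

lemma sum_qpoch_log_term_head_le:
  assumes z: "0 < Re z" and small: "real M * norm z \<le> 1/2"
  shows "(\<Sum>i<Suc M. qpoch_log_term z i) \<le> Re (1 / z) * (pi^2 / 6) + real (Suc M) * norm z"
proof -
  have Re_inverse: "0 \<le> Re (1 / z)"
    using z by (simp add: Re_divide)
  have "z \<noteq> 0" using z by auto
  have "(\<Sum>i<Suc M. qpoch_log_term z i) \<le> (\<Sum>i<Suc M. Re (1 / z) * (1 / (real i)^2) + norm z)"
  proof (rule sum_mono)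
    fix i assume "i \<in> {..<Suc M}"
    then have "real i * norm z \<le> 1/2"
      using small by (meson lessThan_iff less_Suc_eq_le mult_right_mono norm_ge_zero of_nat_le_iff order_trans)
    then show "qpoch_log_term z i \<le> Re (1 / z) * (1 / (real i)^2) + norm z"
      using qpoch_log_term_le_small[OF \<open>z \<noteq> 0\<close>] by simp
  qed
  also have "\<dots> = Re (1 / z) * (\<Sum>i<Suc M. 1 / (real i)^2) + real (Suc M) * norm z"
    by (simp only: sum.distrib sum_distrib_left sum_constant card_lessThan)
  also have "(\<Sum>i<Suc M. 1 / (real i)^2) \<le> pi^2 / 6"
    using sum_le_suminf[OF sums_summable[OF inverse_squares_sums_from_0], of "{..<Suc M}"]
      inverse_squares_sums_from_0 by (simp add: sums_iff)
  then have "Re (1 / z) * (\<Sum>i<Suc M. 1 / (real i)^2) \<le> Re (1 / z) * (pi^2 / 6)"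
    using Re_inverse by (rule mult_left_mono)
  finally show ?thesis
    by simp
qed

lemma pi_squared_le_10: "pi^2 \<le> 10"
proof -
  have "pi^2 \<le> (63/20)^2"
    using pi_approx by (intro power_mono) auto
  then show ?thesis
    by (simp add: power2_eq_square)
qed

lemma sin_ge_seven_twelfths:
  assumes "0 \<le> x" "x \<le> pi/2"
  shows "7/12 * x \<le> sin x"
proof -
  have "\<bar>sin x - (\<Sum>m<3. sin_coeff m * x ^ m)\<bar> \<le> inverse (fact 3) * \<bar>x\<bar> ^ 3"
    by (rule Maclaurin_sin_bound)
  then have "\<bar>sin x - x\<bar> \<le> x^3 / 6"
    using assms by (simp add: numeral_3_eq_3 sin_coeff_def fact_numeral)
  moreover have "x^2 \<le> 5/2"
  proof -
    have "x^2 \<le> (pi/2)^2" using assms by (intro power_mono) auto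
    then show ?thesis using pi_squared_le_10 by (simp add: power_divide)
  qed
  then have "x * x^2 \<le> x * (5/2)"
    using assms(1) by (rule mult_left_mono)
  then have "x^3 \<le> x * (5/2)"
    by (simp add: power3_eq_cube power2_eq_square)
  ultimately show ?thesis
    by linarith
qed

lemma norm_exp_minus_one_ge:
  assumes "0 \<le> b"
  shows "2 * \<bar>sin (y/2)\<bar> \<le> norm (exp (Complex b y) - 1)"
proof -
  have "(norm (exp (Complex b y) - 1))^2 = (exp b * cos y - 1)^2 + (exp b * sin y)^2"
    by (simp add: cmod_power2 Re_exp Im_exp)
  also have "\<dots> = (exp b)^2 * ((sin y)^2 + (cos y)^2) - 2 * exp b * cos y + 1"
    by algebra
  also have "\<dots> = (exp b - 1)^2 + 2 * exp b * (1 - cos y)"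
    unfolding sin_cos_squared_add by algebra
  also have "\<dots> \<ge> 2 * (1 - cos y)"
  proof -
    have "2 * (1 - cos y) \<le> (2 * exp b) * (1 - cos y)"
      using assms by (intro mult_right_mono) auto
    then show ?thesis
      using zero_le_power2[of "exp b - 1"] by linarith
  qed
  finally have "(2 * \<bar>sin (y/2)\<bar>)^2 \<le> (norm (exp (Complex b y) - 1))^2"
    using cos_double_sin[of "y/2"] by (simp add: power2_eq_square)
  then show ?thesis
    by (rule power2_le_imp_le) simp
qed

lemma norm_exp_minus_one_ge_linear:
  assumes "0 \<le> b" "\<bar>y\<bar> \<le> pi"
  shows "7/12 * \<bar>y\<bar> \<le> norm (exp (Complex b y) - 1)"
proof -
  have "7/12 * (\<bar>y\<bar> / 2) \<le> sin (\<bar>y\<bar> / 2)"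
    using assms by (intro sin_ge_seven_twelfths) auto
  also have "sin (\<bar>y\<bar> / 2) = \<bar>sin (y / 2)\<bar>"
  proof (cases "0 \<le> y")
    case True
    then show ?thesis using assms by (simp add: sin_ge_zero)
  next
    case False
    have "0 \<le> sin (- y / 2)" using False assms by (intro sin_ge_zero) auto
    then show ?thesis using False by simp
  qed
  finally have "7/12 * \<bar>y\<bar> \<le> 2 * \<bar>sin (y / 2)\<bar>" by simp
  also have "\<dots> \<le> norm (exp (Complex b y) - 1)"
    using assms by (intro norm_exp_minus_one_ge)
  finally show ?thesis .
qed

lemma Re_inverse_Complex_le:
  assumes b: "0 < b" and y: "b \<le> \<bar>y\<bar>"
  shows "Re (1 / Complex b y) \<le> 1 / (2 * b)"
proof -
  have "b^2 \<le> y^2"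
    using y b by (metis abs_ge_zero power2_abs power_mono less_imp_le)
  have "Re (1 / Complex b y) = b / (b^2 + y^2)"
    by (simp add: Re_divide cmod_power2)
  also have "\<dots> \<le> b / (2 * b * b)"
    using b \<open>b^2 \<le> y^2\<close>
    by (intro divide_left_mono) (auto simp: power2_eq_square intro!: mult_pos_pos add_pos_nonneg)
  also have "\<dots> = 1 / (2 * b)"
    using b by simp
  finally show ?thesis .
qed

lemma suminf_qpoch_log_term_le_far:
  assumes b: "0 < b" and y: "12 * b \<le> \<bar>y\<bar>" "\<bar>y\<bar> \<le> pi"
  shows "(\<Sum>m. qpoch_log_term (Complex b y) m) \<le> pi^2 / (12 * b)"
proof -
  define z where "z = Complex b y"
  have Re_z: "0 < Re z" using b by (simp add: z_def)
  have exp_z: "7 * b \<le> norm (exp z - 1)"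
    using norm_exp_minus_one_ge_linear[of b y] b y by (simp add: z_def)
  have "qpoch_log_term z 1 \<le> norm (1 / (exp z - 1))"
    by (simp add: qpoch_log_term_def complex_Re_le_cmod)
  also have "\<dots> = 1 / norm (exp z - 1)"
    by (simp add: norm_divide)
  also have "\<dots> \<le> 1 / (7 * b)"
    using exp_z b by (intro divide_left_mono) (auto intro!: mult_pos_pos)
  finally have first: "qpoch_log_term z 1 \<le> 1 / (7 * b)" .
  have squares: "(\<lambda>m. 1 / ((real m)^2 * b)) sums (pi^2 / 6 / b)"
    using sums_divide[OF inverse_squares_sums_from_0, of b] by simp
  have "(\<Sum>n. qpoch_log_term z (n + 2)) \<le> (\<Sum>n. 1 / ((real (n + 2))^2 * b))"
  proof (rule suminf_le)
    show "qpoch_log_term z (n + 2) \<le> 1 / ((real (n + 2))^2 * b)" for n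
      using abs_qpoch_log_term_le[OF Re_z, of "n + 2"] by (simp add: z_def)
    show "summable (\<lambda>n. qpoch_log_term z (n + 2))"
      using summable_qpoch_log_term[OF Re_z] by (rule summable_ignore_initial_segment)
    show "summable (\<lambda>n. 1 / ((real (n + 2))^2 * b))"
      by (rule summable_ignore_initial_segment[OF sums_summable[OF squares]])
  qed
  also have "\<dots> = pi^2 / 6 / b - 1 / b"
    using sums_split_initial_segment[OF squares, of 2] by (simp add: sums_iff eval_nat_numeral)
  finally have rest: "(\<Sum>n. qpoch_log_term z (n + 2)) \<le> pi^2 / 6 / b - 1 / b" .
  have "(\<Sum>m. qpoch_log_term z m) = (\<Sum>n. qpoch_log_term z (n + 2)) + qpoch_log_term z 1"
    using suminf_split_initial_segment[OF summable_qpoch_log_term[OF Re_z], of 2]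
    by (simp add: eval_nat_numeral qpoch_log_term_def[of _ 0])
  also have "\<dots> \<le> (1/7 + pi^2 / 6 - 1) / b"
    using first rest b by (simp add: field_simps)
  also have "\<dots> \<le> pi^2 / (12 * b)"
    using b pi_squared_le_10 by (simp add: field_simps)
  finally show ?thesis
    by (simp add: z_def)
qed

lemma suminf_qpoch_log_term_le_near:
  assumes b: "0 < b" "b \<le> 1/52" and y: "b \<le> \<bar>y\<bar>" "\<bar>y\<bar> < 12 * b"
  shows "(\<Sum>m. qpoch_log_term (Complex b y) m) \<le> pi^2 / (12 * b) + 53"
proof -
  define z where "z = Complex b y"
  have Re_z: "Re z = b" by (simp add: z_def)
  have norm_z: "norm z \<le> 13 * b"
    using cmod_le[of z] b y by (simp add: z_def)
  have Re_inverse: "Re (1 / z) \<le> 1 / (2 * b)"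
    unfolding z_def using b y by (intro Re_inverse_Complex_le) auto
  define x where "x = 1 / (26 * b)"
  have x: "2 \<le> x" using b by (simp add: x_def field_simps)
  define M where "M = nat \<lfloor>x\<rfloor>"
  have M_le: "real M \<le> x" using x by (simp add: M_def)
  have M_ge: "x / 2 \<le> real M" using x by (simp add: M_def) linarith
  have M: "1 \<le> M" using M_ge x by simp
  have "(\<Sum>m. qpoch_log_term z m)
      = (\<Sum>n. qpoch_log_term z (n + Suc M)) + (\<Sum>i<Suc M. qpoch_log_term z i)"
    using Re_z b by (intro suminf_split_initial_segment summable_qpoch_log_term) simp
  also have "(\<Sum>n. qpoch_log_term z (n + Suc M)) \<le> 1 / (real M * b)"
    using suminf_qpoch_log_term_tail_le[of z M] Re_z b M by simp
  also have "\<dots> \<le> 52"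
  proof -
    have "1 \<le> real M * (52 * b)"
      using M_ge b by (simp add: x_def field_simps)
    then show ?thesis
      using b M by (simp add: field_simps)
  qed
  also have "(\<Sum>i<Suc M. qpoch_log_term z i) \<le> Re (1 / z) * (pi^2 / 6) + real (Suc M) * norm z"
  proof (rule sum_qpoch_log_term_head_le)
    have "real M * norm z \<le> x * (13 * b)"
      using M_le norm_z b by (intro mult_mono) auto
    then show "real M * norm z \<le> 1/2" using b by (simp add: x_def)
  qed (use Re_z b in simp)
  also have "\<dots> \<le> 1 / (2 * b) * (pi^2 / 6) + 1"
  proof (rule add_mono)
    show "Re (1 / z) * (pi^2 / 6) \<le> 1 / (2 * b) * (pi^2 / 6)"
      using Re_inverse by (rule mult_right_mono) simp
    have "real (Suc M) * norm z \<le> (2 * x) * (13 * b)"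
      using M_le M norm_z b by (intro mult_mono) auto
    then show "real (Suc M) * norm z \<le> 1" using b by (simp add: x_def)
  qed
  finally show ?thesis
    by (simp add: z_def)
qed

lemma suminf_qpoch_log_term_le:
  assumes "0 < b" "b \<le> 1/52" "b \<le> \<bar>y\<bar>" "\<bar>y\<bar> \<le> pi"
  shows "(\<Sum>m. qpoch_log_term (Complex b y) m) \<le> pi^2 / (12 * b) + 53"
proof (cases "12 * b \<le> \<bar>y\<bar>")
  case True
  then show ?thesis using suminf_qpoch_log_term_le_far[of b y] assms by simp
next
  case False
  then show ?thesis using suminf_qpoch_log_term_le_near[of b y] assms by simp
qed

section \<open>The series \<open>H\<close>\<close>

lemma norm_exp_diff_le:
  assumes "0 \<le> Re z" "0 \<le> t"
  shows "norm (exp (- z * of_real (- t)) - exp (- z * of_real t)) \<le> 2 * exp (Re z * t)"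
proof -
  have "norm (exp (- z * of_real (- t)) - exp (- z * of_real t))
      \<le> norm (exp (- z * of_real (- t))) + norm (exp (- z * of_real t))"
    by (rule norm_triangle_ineq4)
  also have "\<dots> = exp (Re z * t) + exp (- (Re z * t))"
    by simp
  also have "exp (- (Re z * t)) \<le> exp (Re z * t)"
    using assms by simp
  finally show ?thesis
    by simp
qed

lemma exp_neg_square_le_geometric:
  assumes "0 \<le> b"
  shows "exp (- b * (real i)^2 / 2) \<le> exp (1/8) * exp (- sqrt b / 2) ^ i"
proof -
  have "0 \<le> (sqrt b * real i - 1/2)^2" by simp
  moreover have "(sqrt b * real i)^2 = b * (real i)^2"
    using assms by (simp add: power_mult_distrib)
  ultimately have "- b * (real i)^2 / 2 \<le> 1/8 + real i * (- sqrt b / 2)"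
    using assms by (simp add: power2_eq_square algebra_simps)
  then show ?thesis
    unfolding exp_of_nat_mult[symmetric] exp_add[symmetric] by simp
qed

lemma norm_H_at_summand_le:
  fixes k m j :: int
  assumes k: "1 \<le> k" and mj: "0 \<le> m + j" and z: "0 < Re z"
  shows "norm (let n = real (Suc i) in
            (-1) ^ i
            * exp (- z * of_real ((real_of_int k - 1/2) * n^2 + real_of_int m * n))
            * (exp (- z * of_real (- n / 2)) - exp (- z * of_real (n / 2)))
            * exp (- z * of_real (real_of_int j * n)))
         \<le> 2 * exp (- Re z * (real i)^2 / 2)"
proof -
  define b where "b = Re z"
  define n where "n = real (Suc i)"
  define A where "A = (real_of_int k - 1/2) * n^2 + real_of_int m * n"
  define J where "J = real_of_int j * n"
  have norm_exp: "norm (exp (- z * of_real r)) = exp (- b * r)" for r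
    by (simp add: b_def)
  have difference: "norm (exp (- z * of_real (- n / 2)) - exp (- z * of_real (n / 2)))
      \<le> 2 * exp (b * (n / 2))"
    unfolding b_def minus_divide_left[symmetric] using z by (intro norm_exp_diff_le) (auto simp: n_def)
  have "(real i)^2 / 2 \<le> A + J - n / 2"
  proof -
    have "1/2 * n^2 \<le> (real_of_int k - 1/2) * n^2"
      using k by (intro mult_right_mono) auto
    moreover have "0 \<le> (real_of_int m + real_of_int j) * n"
      using mj by (simp add: n_def)
    moreover have "(real i)^2 / 2 \<le> n^2 / 2 - n / 2"
      by (simp add: n_def power2_eq_square field_simps)
    ultimately show ?thesis
      by (simp add: A_def J_def algebra_simps)
  qed
  then have exponent: "- b * (A + J - n / 2) \<le> - b * (real i)^2 / 2"
    using z by (simp add: b_def)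
  have "norm ((-1) ^ i * exp (- z * of_real A)
          * (exp (- z * of_real (- n / 2)) - exp (- z * of_real (n / 2)))
          * exp (- z * of_real J))
      = exp (- b * A) * norm (exp (- z * of_real (- n / 2)) - exp (- z * of_real (n / 2)))
        * exp (- b * J)"
    by (simp only: norm_mult norm_power norm_exp norm_minus_cancel norm_one power_one mult_1_left)
  also have "\<dots> \<le> exp (- b * A) * (2 * exp (b * (n / 2))) * exp (- b * J)"
    by (intro mult_right_mono mult_left_mono difference) auto
  also have "\<dots> = 2 * exp (- b * (A + J - n / 2))"
    by (simp add: exp_add[symmetric] algebra_simps)
  also have "\<dots> \<le> 2 * exp (- b * (real i)^2 / 2)"
    using exponent by simp
  finally show ?thesis
    by (simp only: Let_def n_def A_def J_def b_def)
qed

lemma inverse_one_minus_exp_neg_le: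
  fixes s :: real
  assumes s: "0 < s"
  shows "1 / (1 - exp (- s)) \<le> 1 + 1 / s"
proof -
  have "1 / exp s \<le> 1 / (1 + s)"
    using s exp_ge_add_one_self[of s] by (intro divide_left_mono) auto
  then have lower: "s / (1 + s) \<le> 1 - exp (- s)"
    using s by (simp add: exp_minus field_simps)
  have "1 / (1 - exp (- s)) \<le> 1 / (s / (1 + s))"
    using s lower by (intro divide_left_mono) (auto intro!: mult_pos_pos)
  also have "\<dots> = 1 + 1 / s"
    using s by (simp add: field_simps)
  finally show ?thesis .
qed

lemma norm_H_at_le:
  fixes k m j :: int
  assumes k: "1 \<le> k" and mj: "0 \<le> m + j" and b: "0 < b" "b \<le> 1"
  shows "norm (H_at k m j (Complex b y)) \<le> 6 * exp (1/8) / sqrt b"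
proof -
  define z where "z = Complex b y"
  define t where "t = (\<lambda>i::nat. let n = real (Suc i) in
      (-1) ^ i
      * exp (- z * of_real ((real_of_int k - 1/2) * n^2 + real_of_int m * n))
      * (exp (- z * of_real (- n / 2)) - exp (- z * of_real (n / 2)))
      * exp (- z * of_real (real_of_int j * n)))"
  define x where "x = exp (- sqrt b / 2)"
  have x: "0 < x" "x < 1" using b by (auto simp: x_def)
  have t_le: "norm (t i) \<le> 2 * exp (1/8) * x ^ i" for i
  proof -
    have "norm (t i) \<le> 2 * exp (- b * (real i)^2 / 2)"
      unfolding t_def using norm_H_at_summand_le[OF k mj, of z i] b by (simp add: z_def)
    also have "\<dots> \<le> 2 * exp (1/8) * x ^ i"
      using exp_neg_square_le_geometric[of b i] b by (simp add: x_def)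
    finally show ?thesis .
  qed
  have geometric: "summable (\<lambda>i. 2 * exp (1/8) * x ^ i)"
    using x by (intro summable_mult summable_geometric) auto
  have norm_t: "summable (\<lambda>i. norm (t i))"
    by (rule summable_comparison_test'[OF geometric]) (use t_le in auto)
  have "norm (H_at k m j (Complex b y)) = norm (suminf t)"
    by (simp only: H_at_def t_def z_def)
  also have "\<dots> \<le> (\<Sum>i. norm (t i))"
    by (rule summable_norm[OF norm_t])
  also have "\<dots> \<le> (\<Sum>i. 2 * exp (1/8) * x ^ i)"
    by (rule suminf_le[OF t_le norm_t geometric])
  also have "\<dots> = 2 * exp (1/8) * (1 / (1 - x))"
    using x by (simp add: suminf_mult suminf_geometric)
  also have "\<dots> \<le> 2 * exp (1/8) * (1 + 2 / sqrt b)"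
    using inverse_one_minus_exp_neg_le[of "sqrt b / 2"] b
    by (intro mult_left_mono) (auto simp: x_def)
  also have "\<dots> \<le> 2 * exp (1/8) * (3 / sqrt b)"
  proof -
    have "1 \<le> 1 / sqrt b" using b by simp
    moreover have "3 / sqrt b = 1 / sqrt b + 2 / sqrt b"
      by (simp add: add_divide_distrib[symmetric])
    ultimately show ?thesis
      by (intro mult_left_mono) auto
  qed
  finally show ?thesis
    by simp
qed

section \<open>The integral over the arc\<close>

lemma beta_n_pos:
  assumes "1 \<le> n"
  shows "0 < beta_n n"
  using assms by (simp add: beta_n_def)

lemma beta_n_le:
  assumes "5000 \<le> n"
  shows "beta_n n \<le> 1/52"
proof -
  have "170 \<le> sqrt (6 * (real n - 1/24))"
    by (rule real_le_rsqrt) (use assms in simp)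
  then have "pi / sqrt (6 * (real n - 1/24)) \<le> (63/20) / 170"
    using pi_approx by (intro frac_le) auto
  then show ?thesis
    by (simp add: beta_n_def)
qed

lemma exponent_at_beta_n:
  assumes "1 \<le> n"
  shows "real n * beta_n n + pi^2 / (12 * beta_n n) = 3/2 * Lambda_n n + beta_n n / 24"
proof -
  define X where "X = real n - 1/24"
  define a where "a = sqrt 6"
  define c where "c = sqrt X"
  have a: "0 < a" "a * a = 6" by (simp_all add: a_def)
  have c: "0 < c" "c * c = real n - 1/24" using assms by (simp_all add: c_def X_def)
  have beta: "beta_n n = pi / (a * c)"
    by (simp add: beta_n_def X_def[symmetric] a_def c_def real_sqrt_mult)
  have Lambda: "Lambda_n n = pi * c / a"
    by (simp add: Lambda_n_def X_def[symmetric] a_def c_def real_sqrt_divide)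
  have "real n * beta_n n = Lambda_n n + beta_n n / 24"
  proof -
    have "real n * beta_n n = (c * c) * (pi / (a * c)) + (pi / (a * c)) / 24"
      unfolding beta c(2) by (simp add: algebra_simps)
    also have "(c * c) * (pi / (a * c)) = pi * c / a"
      using a c by (simp add: field_simps)
    finally show ?thesis
      unfolding Lambda beta .
  qed
  moreover have "pi^2 / (12 * beta_n n) = Lambda_n n / 2"
  proof -
    have "pi^2 / (12 * beta_n n) = pi * c * (a * a) / (12 * a)"
      unfolding beta using a c by (simp add: field_simps power2_eq_square)
    also have "\<dots> = Lambda_n n / 2"
      unfolding a(2) Lambda using a by (simp add: field_simps)
    finally show ?thesis .
  qed
  ultimately show ?thesis
    by simp
qed

lemma norm_integral_le_of_subset_interval:
  fixes F :: "real \<Rightarrow> 'a::banach"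
  assumes S: "S \<subseteq> {a..b}" and ab: "a \<le> b"
    and B: "0 \<le> B" "\<And>y. y \<in> S \<Longrightarrow> norm (F y) \<le> B"
  shows "norm (integral S F) \<le> B * (b - a)"
proof -
  define G where "G y = (if y \<in> S then F y else 0)" for y
  have "integral S F = integral {a..b} G"
    using integral_restrict_Int[of "{a..b}" S F] Int_absorb2[OF S] by (simp add: G_def[abs_def])
  moreover have "norm (integral {a..b} G) \<le> B * (b - a)"
  proof (cases "G integrable_on {a..b}")
    case True
    have "norm (G y) \<le> B" if "y \<in> cbox a b" for y
      using B by (simp add: G_def)
    with True have "norm (integral (cbox a b) G) \<le> B * measure lborel (cbox a b)"
      by (intro has_integral_bound[OF B(1)] integrable_integral) auto
    then show ?thesis
      using ab by simp
  qed (use B ab in \<open>simp add: not_integrable_integral\<close>)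
  ultimately show ?thesis
    by simp
qed

lemma norm_E_integrand_le:
  fixes k m j :: int
  assumes k: "1 \<le> k" and mj: "0 \<le> m + j" and n: "1 \<le> n" and b_small: "beta_n n \<le> 1/52"
    and y: "beta_n n < \<bar>y\<bar>" "\<bar>y\<bar> \<le> pi"
  shows "norm (H_at k m j (Complex (beta_n n) y) * exp (of_nat n * Complex (beta_n n) y)
                / qpoch_inf (exp (- Complex (beta_n n) y)))
         \<le> 6 * exp (1/8) * exp 54 * (beta_n n powr (-1/2) * exp (3/2 * Lambda_n n))"
proof -
  define b where "b = beta_n n"
  define z where "z = Complex b y"
  have b: "0 < b" "b \<le> 1/52"
    using beta_n_pos[OF n] b_small by (simp_all add: b_def)
  have H: "norm (H_at k m j z) \<le> 6 * exp (1/8) / sqrt b"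
    unfolding z_def using b by (intro norm_H_at_le[OF k mj]) auto
  have inverse_qpoch: "norm (1 / qpoch_inf (exp (- z))) \<le> exp (pi^2 / (12 * b) + 53)"
    using norm_inverse_qpoch_inf_exp[of z] suminf_qpoch_log_term_le[of b y] b y
    by (simp add: z_def b_def)
  have exponent: "real n * b + (pi^2 / (12 * b) + 53) = 3/2 * Lambda_n n + (b / 24 + 53)"
    using exponent_at_beta_n[OF n] unfolding b_def by linarith
  have "norm (H_at k m j z * exp (of_nat n * z) / qpoch_inf (exp (- z)))
      = norm (H_at k m j z) * exp (real n * b) * norm (1 / qpoch_inf (exp (- z)))"
    by (simp add: norm_mult norm_divide z_def)
  also have "\<dots> \<le> 6 * exp (1/8) / sqrt b * exp (real n * b) * exp (pi^2 / (12 * b) + 53)"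
    using H inverse_qpoch b by (intro mult_mono) auto
  also have "\<dots> = 6 * exp (1/8) * (1 / sqrt b) * exp (3/2 * Lambda_n n + (b / 24 + 53))"
    by (simp add: exponent flip: exp_add)
  also have "\<dots> \<le> 6 * exp (1/8) * (1 / sqrt b) * exp (3/2 * Lambda_n n + 54)"
    using b by (intro mult_left_mono) auto
  also have "1 / sqrt b = b powr (-1/2)"
    using b by (simp add: powr_minus_divide powr_half_sqrt)
  finally show ?thesis
    by (simp add: z_def b_def exp_add mult_ac)
qed

lemma norm_E_int_le:
  fixes k m j :: int
  assumes k: "1 \<le> k" and mj: "0 \<le> m + j" and n: "5000 \<le> n"
  shows "norm (E_int k j n m)
         \<le> 6 * exp (1/8) * exp 54 * (beta_n n powr (-1/2) * exp (3/2 * Lambda_n n))"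
proof -
  define B where "B = 6 * exp (1/8) * exp 54 * (beta_n n powr (-1/2) * exp (3/2 * Lambda_n n))"
  define I where "I = integral {y. beta_n n < \<bar>y\<bar> \<and> \<bar>y\<bar> \<le> pi}
    (\<lambda>y. let z = Complex (beta_n n) y in H_at k m j z * exp (of_nat n * z) / qpoch_inf (exp (- z)))"
  have "norm I \<le> B * (pi - - pi)"
    unfolding I_def
  proof (rule norm_integral_le_of_subset_interval)
    fix y assume "y \<in> {y. beta_n n < \<bar>y\<bar> \<and> \<bar>y\<bar> \<le> pi}"
    then show "norm (let z = Complex (beta_n n) y in
                 H_at k m j z * exp (of_nat n * z) / qpoch_inf (exp (- z))) \<le> B"
      unfolding Let_def B_def using n by (intro norm_E_integrand_le[OF k mj _ beta_n_le[OF n]]) auto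
  qed (auto simp: B_def)
  moreover have "norm (E_int k j n m) = norm I / (2 * pi)"
    by (simp add: E_int_def I_def norm_mult norm_divide)
  ultimately show ?thesis
    by (simp add: B_def pos_divide_le_eq)
qed

theorem proposition4p2:
  fixes k j :: int
  assumes "k \<ge> 1"
  shows "\<exists>C N. \<forall>n \<ge> N. \<forall>m::int. n \<ge> 1 \<and> m \<ge> 0 \<and> m + j \<ge> 0 \<longrightarrow>
           norm (E_int k j n m) \<le> C * (beta_n n powr (-1/2) * exp (3/2 * Lambda_n n))"
proof (intro exI allI impI)
  fix n :: nat and m :: int
  assume "5000 \<le> n" and "n \<ge> 1 \<and> m \<ge> 0 \<and> m + j \<ge> 0"
  then show "norm (E_int k j n m)
      \<le> 6 * exp (1/8) * exp 54 * (beta_n n powr (-1/2) * exp (3/2 * Lambda_n n))"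
    using norm_E_int_le[OF assms] by simp
qed

end
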